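(* Let $\mathit{Ag}=\{a_1,\dots,a_n\}$ ($n\ge2$) be a finite set of agents, $\mathit{In}$ a finite non-empty input space, and let $\mathit{Adv}$ be an oblivious adversary given by a non-empty set $X\subseteq CP_{\mathit{Ag}}$ of communication graphs. Let $\mathcal{P}=(CP,R,\mathit{Pre},\overline{N})$ be the communication pattern model with $CP=X$, $cp\,R_a\,cp'$ iff $N^-_{cp}(a)=N^-_{cp'}(a)$, $\mathit{Pre}(cp)=\top$ for all $cp$, and $\overline{N}(cp,a)=N^-_{cp}(a)$. Then the single model $\mathcal{P}$ reflects $\mathit{Adv}$: for every $r\ge1$, writing $M^r=(W^r,\sim^r,L^r)=M^0\odot\mathcal{P}\odot\cdots\odot\mathcal{P}$ ($r$ factors of $\mathcal{P}$), there is a bijection $f^r:W^r\to\mathcal{C}^r_{\mathit{Adv}}$ such that for all $w,w'\in W^r$ and every agent $a_i$, $w\sim^r_{a_i}w'$ iff $a_i$ does not distinguish $f^r(w)$ and $f^r(w')$. In particular, the communication of $\mathit{Adv}$ in every round is modeled by the same fixed (constant-size) communication pattern model.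
   Context: A communication graph is a directed graph with vertex set $\mathit{Ag}$ (edge $(a_j,a_i)$: $a_j$'s message reaches $a_i$ in that round); $N^-_G(a_i)=\{a_j:(a_j,a_i)\in G\}$; $CP_{\mathit{Ag}}$ is the set of all such graphs. An adversary is a set of infinite sequences over $CP_{\mathit{Ag}}$; a finite sequence is a prefix of $\mathit{Adv}$ if it is a prefix of one of its sequences. $\mathit{Adv}$ is oblivious with set $X$ if the length-one prefixes of $\mathit{Adv}$ are exactly the graphs in $X$ and for every prefix $S$ of $\mathit{Adv}$ and every $G\in X$, $S\cdot G$ is a prefix of $\mathit{Adv}$. An $r$-execution is $(I,S)$ with $I\in\mathit{In}^n$ and $S$ a prefix of length $r$. Full-information views: $\mathit{view}(a_i,(I,[\,]))=I(i)$; $\mathit{view}(a_i,(I,S\cdot cp))=[\mathit{view}[1],\dots,\mathit{view}[n]]$ with $\mathit{view}[j]=\mathit{view}(a_j,(I,S))$ if $a_j\in N^-_{cp}(a_i)\cup\{a_i\}$ and $\bot$ otherwise. The configuration at the end of $(I,S)$ is $C$ with $C(i)=\mathit{view}(a_i,(I,S))$; $a_i$ does not distinguish $C,C'$ iff $C(i)=C'(i)$; $\mathcal{C}^r_{\mathit{Adv}}$ is the set of configurations at the end of $r$-executions. Epistemic models $M=(W,\sim,L)$: finite set of worlds, an equivalence relation $\sim_a$ per agent, valuation $L:W\to\wp(\mathit{Props})$. Initial model $M^0$: $\mathit{Props}=\{in_{a,v}\}$, $W^0=\mathit{In}^n$, $I\sim^0_{a_i}I'$ iff $I(i)=I'(i)$,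 $L^0(I)=\{in_{a_i,v}:I(i)=v\}$. Communication pattern model: $\mathcal{P}=(CP,R,\mathit{Pre},\overline{N})$ with $CP$ non-empty finite, $R_a$ equivalence relations on $CP$, $\mathit{Pre}$ assigning epistemic formulas, $\overline{N}:CP\times\mathit{Ag}\to\wp(\mathit{Ag})$. Product $M\odot\mathcal{P}=(W',\sim',L')$: $W'=\{(w,cp): M,w\models\mathit{Pre}(cp)\}$; $(w,cp)\sim'_a(w',cp')$ iff $w\sim_a w'$, $cp\,R_a\,cp'$, $\overline{N}(cp,a)=\overline{N}(cp',a)$, and $w\sim_{a'}w'$ for all $a'\in\overline{N}(cp,a)$; $L'((w,cp))=L(w)$. *)

theory Defs
  imports Main
begin

text \<open>Agents are a_1..a_n, represented by indices 0..<n. A communication graph is a set of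
  directed edges (j,i) (message of agent j reaches agent i), without self-loops.\<close>

type_synonym graph = "(nat \<times> nat) set"

definition CP_Ag :: "nat \<Rightarrow> graph set" where
  "CP_Ag n = Pow {(j,i). j < n \<and> i < n \<and> j \<noteq> i}"

definition in_nbrs :: "graph \<Rightarrow> nat \<Rightarrow> nat set" where
  "in_nbrs G i = {j. (j,i) \<in> G}"

definition adversary :: "nat \<Rightarrow> (nat \<Rightarrow> graph) set \<Rightarrow> bool" where
  "adversary n Adv \<longleftrightarrow> (\<forall>\<sigma>\<in>Adv. \<forall>k. \<sigma> k \<in> CP_Ag n)"

definition is_prefix :: "(nat \<Rightarrow> graph) set \<Rightarrow> graph list \<Rightarrow> bool" where
  "is_prefix Adv S \<longleftrightarrow> (\<exists>\<sigma>\<in>Adv. \<forall>k<length S. \<sigma> k = S ! k)"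

definition oblivious :: "(nat \<Rightarrow> graph) set \<Rightarrow> graph set \<Rightarrow> bool" where
  "oblivious Adv X \<longleftrightarrow>
     (\<forall>G. is_prefix Adv [G] \<longleftrightarrow> G \<in> X) \<and>
     (\<forall>S G. is_prefix Adv S \<longrightarrow> (is_prefix Adv (S @ [G]) \<longleftrightarrow> G \<in> X))"

text \<open>Full-information views; None plays the role of bottom.\<close>

datatype 'v view = Inp 'v | Vec "'v view option list"


text \<open>We use a definition over snoc via recursion on reversed lists.\<close>

fun view_rev :: "nat \<Rightarrow> nat \<Rightarrow> 'v list \<Rightarrow> graph list \<Rightarrow> 'v view" where
  "view_rev n i I [] = Inp (I ! i)"
| "view_rev n i I (cp # Srev) =
     Vec (map (\<lambda>j. if j \<in> in_nbrs cp i \<union> {i} then Some (view_rev n j I Srev) else None) [0..<n])"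

definition fview :: "nat \<Rightarrow> nat \<Rightarrow> 'v list \<Rightarrow> graph list \<Rightarrow> 'v view" where
  "fview n i I S = view_rev n i I (rev S)"

definition config :: "nat \<Rightarrow> 'v list \<Rightarrow> graph list \<Rightarrow> 'v view list" where
  "config n I S = map (\<lambda>i. fview n i I S) [0..<n]"

definition configs :: "nat \<Rightarrow> 'v set \<Rightarrow> (nat \<Rightarrow> graph) set \<Rightarrow> nat \<Rightarrow> 'v view list set" where
  "configs n In Adv r = {config n I S | I S. length I = n \<and> set I \<subseteq> In \<and>
                                               length S = r \<and> is_prefix Adv S}"

definition indist :: "nat \<Rightarrow> 'v view list \<Rightarrow> 'v view list \<Rightarrow> bool" where
  "indist i C C' \<longleftrightarrow> C ! i = C' ! i"

datatype 'p formula = FTop | FProp 'p | FNeg "'p formula" | FAnd "'p formula" "'p formula"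
  | FK nat "'p formula"

record ('w, 'p) emodel =
  worlds :: "'w set"
  rel :: "nat \<Rightarrow> 'w \<Rightarrow> 'w \<Rightarrow> bool"
  val :: "'w \<Rightarrow> 'p set"

fun sat :: "('w, 'p) emodel \<Rightarrow> 'w \<Rightarrow> 'p formula \<Rightarrow> bool" where
  "sat M w FTop = True"
| "sat M w (FProp p) = (p \<in> val M w)"
| "sat M w (FNeg \<phi>) = (\<not> sat M w \<phi>)"
| "sat M w (FAnd \<phi> \<psi>) = (sat M w \<phi> \<and> sat M w \<psi>)"
| "sat M w (FK a \<phi>) = (\<forall>v\<in>worlds M. rel M a w v \<longrightarrow> sat M v \<phi>)"

record ('c, 'p) cpmodel =
  pats :: "'c set"
  prel :: "nat \<Rightarrow> 'c \<Rightarrow> 'c \<Rightarrow> bool"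
  pre :: "'c \<Rightarrow> 'p formula"
  nbar :: "'c \<Rightarrow> nat \<Rightarrow> nat set"

definition prod_model :: "('w, 'p) emodel \<Rightarrow> ('c, 'p) cpmodel \<Rightarrow> ('w \<times> 'c, 'p) emodel" where
  "prod_model M P =
     \<lparr> worlds = {(w, cp). w \<in> worlds M \<and> cp \<in> pats P \<and> sat M w (pre P cp)},
       rel = (\<lambda>a (w, cp) (w', cp'). rel M a w w' \<and> prel P a cp cp' \<and>
                 nbar P cp a = nbar P cp' a \<and> (\<forall>a'\<in>nbar P cp a. rel M a' w w')),
       val = (\<lambda>(w, cp). val M w) \<rparr>"

text \<open>To iterate the product inside a single type, worlds are renamed along the injective
  constructor Wstep: the world (w, cp) of the product becomes Wstep w cp.\<close>

datatype ('v, 'c) world = W0 "'v list" | Wstep "('v, 'c) world" 'c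

definition map_model :: "('a \<Rightarrow> 'b) \<Rightarrow> ('a, 'p) emodel \<Rightarrow> ('b, 'p) emodel" where
  "map_model g M =
     \<lparr> worlds = g ` worlds M,
       rel = (\<lambda>a x y. \<exists>u\<in>worlds M. \<exists>v\<in>worlds M. x = g u \<and> y = g v \<and> rel M a u v),
       val = (\<lambda>x. val M (the_inv_into (worlds M) g x)) \<rparr>"

definition step_model :: "('c, 'p) cpmodel \<Rightarrow> (('v, 'c) world, 'p) emodel \<Rightarrow> (('v, 'c) world, 'p) emodel" where
  "step_model P M = map_model (\<lambda>(w, cp). Wstep w cp) (prod_model M P)"

text \<open>Initial model M^0: worlds are input vectors in In^n; proposition in_{a_i,v} is (i,v).\<close>

definition M0 :: "nat \<Rightarrow> 'v set \<Rightarrow> (('v, 'c) world, nat \<times> 'v) emodel" where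
  "M0 n In = \<lparr> worlds = W0 ` {I. length I = n \<and> set I \<subseteq> In},
               rel = (\<lambda>a x y. case (x, y) of (W0 I, W0 I') \<Rightarrow> I ! a = I' ! a | _ \<Rightarrow> False),
               val = (\<lambda>x. case x of W0 I \<Rightarrow> {(i, v). i < n \<and> I ! i = v} | _ \<Rightarrow> {}) \<rparr>"

definition Mr :: "nat \<Rightarrow> 'v set \<Rightarrow> ('c, nat \<times> 'v) cpmodel \<Rightarrow> nat \<Rightarrow> (('v, 'c) world, nat \<times> 'v) emodel" where
  "Mr n In P r = (step_model P ^^ r) (M0 n In)"

definition P_adv :: "graph set \<Rightarrow> (graph, 'p) cpmodel" where
  "P_adv X = \<lparr> pats = X,
               prel = (\<lambda>a cp cp'. in_nbrs cp a = in_nbrs cp' a),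
               pre = (\<lambda>_. FTop),
               nbar = (\<lambda>cp a. in_nbrs cp a) \<rparr>"

end

theory Submission
  imports Defs
begin

text \<open>A world of the r-fold product is an input vector together with a sequence of r graphs
  from X, and since the adversary is oblivious these sequences are exactly its prefixes of
  length r. Reading off the full-information view of every agent from such a world gives the
  bijection onto configurations. By induction on r, agent i cannot tell two product worlds
  (w, cp) and (w', cp') apart iff i has the same in-neighbours in cp and cp' and neither i nor
  any of these in-neighbours could tell w and w' apart, which is precisely the condition for
  the new views of i to coincide. Injectivity holds because the views of all agents recover the
  inputs and, as graphs have no self-loops, the in-neighbourhoods recover each graph.\<close>

fun world_view :: "nat \<Rightarrow> nat \<Rightarrow> ('v, graph) world \<Rightarrow> 'v view" where
  "world_view n i (W0 I) = Inp (I ! i)"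
| "world_view n i (Wstep w cp) =
     Vec (map (\<lambda>j. if j \<in> in_nbrs cp i \<union> {i} then Some (world_view n j w) else None) [0..<n])"

definition world_config :: "nat \<Rightarrow> ('v, graph) world \<Rightarrow> 'v view list" where
  "world_config n w = map (\<lambda>i. world_view n i w) [0..<n]"

definition world_of :: "'v list \<Rightarrow> graph list \<Rightarrow> ('v, graph) world" where
  "world_of I S = foldl Wstep (W0 I) S"

lemma world_of_snoc: "world_of I (S @ [G]) = Wstep (world_of I S) G"
  by (simp add: world_of_def)

lemma world_view_world_of: "world_view n i (world_of I S) = fview n i I S"
  by (induction S arbitrary: i rule: rev_induct) (simp_all add: world_of_def fview_def)

lemma world_config_world_of: "world_config n (world_of I S) = config n I S"
  by (simp add: world_config_def config_def world_view_world_of)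

lemma in_nbrs_CP_Ag:
  assumes "cp \<in> CP_Ag n" "i < n"
  shows "in_nbrs cp i \<subseteq> {..<n}" and "i \<notin> in_nbrs cp i"
  using assms by (auto simp: CP_Ag_def in_nbrs_def)

lemma CP_Ag_eqI:
  assumes "cp \<in> CP_Ag n" "cp' \<in> CP_Ag n" "\<And>i. i < n \<Longrightarrow> in_nbrs cp i = in_nbrs cp' i"
  shows "cp = cp'"
proof (rule set_eqI)
  fix e :: "nat \<times> nat"
  obtain j i where e: "e = (j, i)" by (cases e)
  show "e \<in> cp \<longleftrightarrow> e \<in> cp'"
  proof (cases "i < n")
    case True
    then show ?thesis using assms(3)[OF True] e by (auto simp: in_nbrs_def)
  next
    case False
    then show ?thesis using assms(1,2) e by (auto simp: CP_Ag_def)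
  qed
qed

lemma world_view_Wstep_eq_iff:
  assumes "cp \<in> CP_Ag n" "cp' \<in> CP_Ag n" "i < n"
  shows "world_view n i (Wstep w cp) = world_view n i (Wstep w' cp') \<longleftrightarrow>
     in_nbrs cp i = in_nbrs cp' i \<and> (\<forall>j\<in>in_nbrs cp i \<union> {i}. world_view n j w = world_view n j w')"
  using in_nbrs_CP_Ag[OF assms(1,3)] in_nbrs_CP_Ag[OF assms(2,3)] assms(3)
  by (auto simp: list_eq_iff_nth_eq split: if_splits)

lemma is_prefix_butlast:
  assumes "is_prefix Adv (S @ [G])"
  shows "is_prefix Adv S"
proof -
  obtain \<sigma> where "\<sigma> \<in> Adv" "\<forall>k<length (S @ [G]). \<sigma> k = (S @ [G]) ! k"
    using assms unfolding is_prefix_def by blast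
  then show ?thesis
    unfolding is_prefix_def by (intro bexI[of _ \<sigma>]) (auto simp: nth_append)
qed

lemma is_prefix_oblivious_iff:
  assumes "oblivious Adv X" "X \<noteq> {}"
  shows "is_prefix Adv S \<longleftrightarrow> set S \<subseteq> X"
proof (induction S rule: rev_induct)
  case Nil
  obtain G where "G \<in> X" using assms(2) by auto
  then have "is_prefix Adv [G]" using assms(1) by (simp add: oblivious_def)
  then show ?case by (auto simp: is_prefix_def)
next
  case (snoc G S)
  then show ?case
    using assms(1) is_prefix_butlast[of Adv S G] by (auto simp: oblivious_def)
qed

lemma Mr_0: "Mr n In P 0 = M0 n In"
  by (simp add: Mr_def)

lemma Mr_Suc: "Mr n In P (Suc r) = step_model P (Mr n In P r)"
  by (simp add: Mr_def)

lemma worlds_step_model_P_adv: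
  "worlds (step_model (P_adv X) M) = (\<lambda>(w, cp). Wstep w cp) ` (worlds M \<times> X)"
  by (auto simp: step_model_def map_model_def prod_model_def P_adv_def)

lemma rel_step_model_P_adv:
  assumes "w \<in> worlds M" "w' \<in> worlds M" "cp \<in> X" "cp' \<in> X"
  shows "rel (step_model (P_adv X) M) a (Wstep w cp) (Wstep w' cp') \<longleftrightarrow>
     rel M a w w' \<and> in_nbrs cp a = in_nbrs cp' a \<and> (\<forall>a'\<in>in_nbrs cp a. rel M a' w w')"
  using assms by (auto simp: step_model_def map_model_def prod_model_def P_adv_def)

lemma worlds_Mr_SucE:
  assumes "w \<in> worlds (Mr n In (P_adv X) (Suc r))"
  obtains v cp where "w = Wstep v cp" "v \<in> worlds (Mr n In (P_adv X) r)" "cp \<in> X"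
  using assms by (auto simp: Mr_Suc worlds_step_model_P_adv)

lemma worlds_Mr_P_adv:
  "worlds (Mr n In (P_adv X) r) =
     {world_of I S | I S. length I = n \<and> set I \<subseteq> In \<and> length S = r \<and> set S \<subseteq> X}"
proof (induction r)
  case 0
  then show ?case by (auto simp: Mr_0 M0_def world_of_def)
next
  case (Suc r)
  have "worlds (Mr n In (P_adv X) (Suc r)) =
      (\<lambda>(w, cp). Wstep w cp) ` (worlds (Mr n In (P_adv X) r) \<times> X)"
    by (simp add: Mr_Suc worlds_step_model_P_adv)
  also have "\<dots> = {world_of I (S @ [G]) | I S G.
      length I = n \<and> set I \<subseteq> In \<and> length S = r \<and> set S \<subseteq> X \<and> G \<in> X}"
    unfolding Suc.IH world_of_snoc by fast
  also have "\<dots> =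
      {world_of I S | I S. length I = n \<and> set I \<subseteq> In \<and> length S = Suc r \<and> set S \<subseteq> X}"
  proof (intro set_eqI iffI)
    fix x
    assume "x \<in> {world_of I S | I S.
      length I = n \<and> set I \<subseteq> In \<and> length S = Suc r \<and> set S \<subseteq> X}"
    then obtain I S where x: "x = world_of I S" "length I = n" "set I \<subseteq> In"
      "length S = Suc r" "set S \<subseteq> X"
      by blast
    then obtain S' G where "S = S' @ [G]"
      by (metis length_Suc_conv_rev)
    with x show "x \<in> {world_of I (S @ [G]) | I S G.
      length I = n \<and> set I \<subseteq> In \<and> length S = r \<and> set S \<subseteq> X \<and> G \<in> X}" by auto
  qed force
  finally show ?case .
qed

lemma rel_Mr_P_adv_iff:
  assumes "X \<subseteq> CP_Ag n"
    and "w \<in> worlds (Mr n In (P_adv X) r)" "w' \<in> worlds (Mr n In (P_adv X) r)" "i < n"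
  shows "rel (Mr n In (P_adv X) r) i w w' \<longleftrightarrow> world_view n i w = world_view n i w'"
  using assms(2-)
proof (induction r arbitrary: w w' i)
  case 0
  then show ?case by (auto simp: Mr_0 M0_def)
next
  case (Suc r)
  obtain v cp where v: "w = Wstep v cp" "v \<in> worlds (Mr n In (P_adv X) r)" "cp \<in> X"
    using Suc.prems(1) by (rule worlds_Mr_SucE)
  obtain v' cp' where v': "w' = Wstep v' cp'" "v' \<in> worlds (Mr n In (P_adv X) r)" "cp' \<in> X"
    using Suc.prems(2) by (rule worlds_Mr_SucE)
  have cps: "cp \<in> CP_Ag n" "cp' \<in> CP_Ag n" using v v' assms(1) by auto
  have "rel (Mr n In (P_adv X) (Suc r)) i w w' \<longleftrightarrow>
     rel (Mr n In (P_adv X) r) i v v' \<and> in_nbrs cp i = in_nbrs cp' i \<and>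
     (\<forall>j\<in>in_nbrs cp i. rel (Mr n In (P_adv X) r) j v v')"
    using v v' by (simp add: Mr_Suc rel_step_model_P_adv)
  also have "\<dots> \<longleftrightarrow> world_view n i v = world_view n i v' \<and> in_nbrs cp i = in_nbrs cp' i \<and>
     (\<forall>j\<in>in_nbrs cp i. world_view n j v = world_view n j v')"
    using Suc.IH[OF v(2) v'(2)] Suc.prems(3) in_nbrs_CP_Ag(1)[OF cps(1) Suc.prems(3)] by blast
  also have "\<dots> \<longleftrightarrow> world_view n i (Wstep v cp) = world_view n i (Wstep v' cp')"
    unfolding world_view_Wstep_eq_iff[OF cps Suc.prems(3)] by blast
  finally show ?case by (simp only: v(1) v'(1))
qed

lemma inj_on_world_config_Mr_P_adv:
  assumes "X \<subseteq> CP_Ag n"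
  shows "inj_on (world_config n) (worlds (Mr n In (P_adv X) r))"
proof (induction r)
  case 0
  show ?case
    by (rule inj_onI) (auto simp: Mr_0 M0_def world_config_def intro: nth_equalityI)
next
  case (Suc r)
  show ?case
  proof (rule inj_onI)
    fix w w'
    assume w: "w \<in> worlds (Mr n In (P_adv X) (Suc r))"
      and w': "w' \<in> worlds (Mr n In (P_adv X) (Suc r))"
      and eq: "world_config n w = world_config n w'"
    obtain v cp where v: "w = Wstep v cp" "v \<in> worlds (Mr n In (P_adv X) r)" "cp \<in> X"
      using w by (rule worlds_Mr_SucE)
    obtain v' cp' where v': "w' = Wstep v' cp'" "v' \<in> worlds (Mr n In (P_adv X) r)" "cp' \<in> X"
      using w' by (rule worlds_Mr_SucE)
    have cps: "cp \<in> CP_Ag n" "cp' \<in> CP_Ag n" using v v' assms by auto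
    have views: "in_nbrs cp i = in_nbrs cp' i \<and> world_view n i v = world_view n i v'"
      if "i < n" for i
    proof -
      have "world_view n i (Wstep v cp) = world_view n i (Wstep v' cp')"
        using eq that unfolding v(1) v'(1) world_config_def by (simp only: list_eq_iff_nth_eq) simp
      then show ?thesis
        unfolding world_view_Wstep_eq_iff[OF cps that] by blast
    qed
    have "v = v'"
      using Suc.IH v(2) v'(2) views by (auto simp: inj_on_def world_config_def)
    moreover have "cp = cp'"
      using CP_Ag_eqI[OF cps] views by blast
    ultimately show "w = w'" using v v' by simp
  qed
qed

lemma configs_oblivious_eq_image:
  assumes "oblivious Adv X" "X \<noteq> {}"
  shows "configs n In Adv r = world_config n ` worlds (Mr n In (P_adv X) r)"
  unfolding configs_def worlds_Mr_P_adv is_prefix_oblivious_iff[OF assms]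
  unfolding world_config_world_of[symmetric] by blast

theorem corollary1:
  fixes n :: nat and In :: "'v set" and Adv :: "(nat \<Rightarrow> graph) set" and X :: "graph set"
  assumes "n \<ge> 2" and "finite In" and "In \<noteq> {}"
    and "X \<subseteq> CP_Ag n" and "X \<noteq> {}"
    and "adversary n Adv" and "oblivious Adv X"
  shows "\<forall>r\<ge>1. \<exists>f. bij_betw f (worlds (Mr n In (P_adv X) r)) (configs n In Adv r) \<and>
           (\<forall>w\<in>worlds (Mr n In (P_adv X) r). \<forall>w'\<in>worlds (Mr n In (P_adv X) r). \<forall>i<n.
              rel (Mr n In (P_adv X) r) i w w' \<longleftrightarrow> indist i (f w) (f w'))"
proof (intro allI impI exI conjI)
  fix r :: nat
  show "bij_betw (world_config n) (worlds (Mr n In (P_adv X) r)) (configs n In Adv r)"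
    unfolding bij_betw_def configs_oblivious_eq_image[OF assms(7,5)]
    using inj_on_world_config_Mr_P_adv[OF assms(4)] by simp
  show "\<forall>w\<in>worlds (Mr n In (P_adv X) r). \<forall>w'\<in>worlds (Mr n In (P_adv X) r). \<forall>i<n.
      rel (Mr n In (P_adv X) r) i w w' \<longleftrightarrow> indist i (world_config n w) (world_config n w')"
  proof (intro ballI allI impI)
    fix w w' i
    assume "w \<in> worlds (Mr n In (P_adv X) r)" "w' \<in> worlds (Mr n In (P_adv X) r)" "i < n"
    then show "rel (Mr n In (P_adv X) r) i w w' \<longleftrightarrow>
        indist i (world_config n w) (world_config n w')"
      using rel_Mr_P_adv_iff[OF assms(4)] by (simp add: indist_def world_config_def)
  qed
qed

end
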